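(* Let $s<\infty$ and let $f_1,\dots,f_s:[0,1]\to\mathbb{R}$ each satisfy (i) monotonicity ($x_1\ge x_2\Rightarrow f(x_1)\ge f(x_2)$), (ii) concavity ($f(\sum_i p_ix_i)\ge\sum_i p_if(x_i)$ for probability weights $p_i$), and (iii) normalization ($f(0)=0$, $f(1)=1$). For $k=1,\dots,s$ let $E_k$ be the entanglement measure on pure two-qubit states given by $E_k(|\psi\rangle)=f_k(x(|\psi\rangle))$, extended to ensembles by $E_k(\{p_i,|\psi_i\rangle\})=\sum_i p_iE_k(|\psi_i\rangle)$. Then there exist pure two-qubit states $|\psi_1\rangle,|\psi_2\rangle,|\phi\rangle$ and $p_1\in(0,1)$, $p_2=1-p_1$, such that, with $D_1=\{(p_1,|\psi_1\rangle),(p_2,|\psi_2\rangle)\}$ and $D_2=\{(1,|\phi\rangle)\}$, $$E_k(D_1)\ge E_k(D_2)\quad\text{for all }k=1,\dots,s,$$ and yet the transformation $D_1\to D_2$ cannot be realized by LOCC with certainty.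
   Context: For a pure two-qubit state $|\psi\rangle=\sqrt{\lambda_0}|00\rangle+\sqrt{\lambda_1}|11\rangle$ (Schmidt form, $\lambda_0+\lambda_1=1$), set $x(|\psi\rangle)=2\min\{\lambda_0,\lambda_1\}\in[0,1]$. A probability distribution (ensemble) of pure bipartite states is $D=\{(p_i,|\psi_i\rangle)\}_{i=1}^n$, meaning the two parties share $|\psi_i\rangle$ with probability $p_i$ and both know the index $i$. A transformation $D_1=\{(p_i,|\psi_i\rangle)\}_{i=1}^{n_1}\to D_2=\{(q_j,|\phi_j\rangle)\}_{j=1}^{n_2}$ is realizable by LOCC (with certainty) if there exist conditional probabilities $q_{j|i}\ge0$ with $\sum_j q_{j|i}=1$ and $q_j=\sum_i p_iq_{j|i}$, such that for each $i$ there is an LOCC protocol (local operations and classical communication) that transforms $|\psi_i\rangle$ into the ensemble $\{(q_{j|i},|\phi_j\rangle)\}_j$, i.e. outputs $|\phi_j\rangle$ with probability $q_{j|i}$. *)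

theory Defs
  imports "HOL-Analysis.Analysis"
begin

text \<open>Two-qubit pure states as coefficient functions: v a b is the amplitude of |a b>,
  with False = |0>, True = |1>.  First index: Alice's qubit; second: Bob's qubit.
  Vectors need not be normalised (unnormalised branch states in protocols).\<close>
type_synonym qstate = "bool \<Rightarrow> bool \<Rightarrow> complex"
type_synonym qop = "bool \<Rightarrow> bool \<Rightarrow> complex"   \<comment> \<open>2x2 matrix, M i j\<close>

definition sqnorm :: "qstate \<Rightarrow> real" where
  "sqnorm v = (\<Sum>a\<in>UNIV. \<Sum>b\<in>UNIV. (cmod (v a b))^2)"

definition is_pure_state :: "qstate \<Rightarrow> bool" where
  "is_pure_state v \<longleftrightarrow> sqnorm v = 1"

definition schmidt_state :: "real \<Rightarrow> qstate" where
  "schmidt_state l0 = (\<lambda>a b. if a = b then (if a then complex_of_real (sqrt (1 - l0))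
                                               else complex_of_real (sqrt l0)) else 0)"

text \<open>x(|psi>) = 2 min(l0, l1) for a Schmidt-form state with coefficients l0, l1 = 1 - l0.\<close>
definition xval :: "real \<Rightarrow> real" where
  "xval l0 = 2 * min l0 (1 - l0)"

definition applyA :: "qop \<Rightarrow> qstate \<Rightarrow> qstate" where
  "applyA M v = (\<lambda>a b. \<Sum>a'\<in>UNIV. M a a' * v a' b)"

definition applyB :: "qop \<Rightarrow> qstate \<Rightarrow> qstate" where
  "applyB M v = (\<lambda>a b. \<Sum>b'\<in>UNIV. M b b' * v a b')"

definition kraus_complete :: "qop list \<Rightarrow> bool" where
  "kraus_complete Ms \<longleftrightarrow> (\<forall>i j. (\<Sum>M\<leftarrow>Ms. \<Sum>c\<in>UNIV. cnj (M c i) * M c j) = (if i = j then 1 else 0))"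

text \<open>Finite-round LOCC protocols: a tree; at each internal node one party performs a
  measurement (list of Kraus operators, each with a continuation protocol, outcome broadcast),
  at each leaf the parties declare an output label j.  Fine-grained (pure) Kraus operators
  suffice since the desired outputs are pure; local unitaries are one-outcome measurements.\<close>
datatype protocol = Leaf nat | MeasA "(qop \<times> protocol) list" | MeasB "(qop \<times> protocol) list"

fun valid_protocol :: "protocol \<Rightarrow> bool" where
  "valid_protocol (Leaf j) = True"
| "valid_protocol (MeasA l) = (kraus_complete (map fst l) \<and> (\<forall>x\<in>set l. valid_protocol (snd x)))"
| "valid_protocol (MeasB l) = (kraus_complete (map fst l) \<and> (\<forall>x\<in>set l. valid_protocol (snd x)))"

fun outprob :: "protocol \<Rightarrow> qstate \<Rightarrow> nat \<Rightarrow> real" where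
  "outprob (Leaf j) v k = (if j = k then sqnorm v else 0)"
| "outprob (MeasA l) v k = sum_list (map (\<lambda>x. outprob (snd x) (applyA (fst x) v) k) l)"
| "outprob (MeasB l) v k = sum_list (map (\<lambda>x. outprob (snd x) (applyB (fst x) v) k) l)"

text \<open>At every leaf labelled j the (unnormalised) post-measurement state is a multiple of
  the target phi j, i.e. equal to phi j as a physical state (or the branch has probability 0).\<close>
fun leaves_ok :: "(nat \<Rightarrow> qstate) \<Rightarrow> protocol \<Rightarrow> qstate \<Rightarrow> bool" where
  "leaves_ok phi (Leaf j) v = (\<exists>c::complex. v = (\<lambda>a b. c * phi j a b))"
| "leaves_ok phi (MeasA l) v = (\<forall>x\<in>set l. leaves_ok phi (snd x) (applyA (fst x) v))"
| "leaves_ok phi (MeasB l) v = (\<forall>x\<in>set l. leaves_ok phi (snd x) (applyB (fst x) v))"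

type_synonym ensemble = "(real \<times> qstate) list"

definition locc_pure_to_ens :: "qstate \<Rightarrow> ensemble \<Rightarrow> bool" where
  "locc_pure_to_ens psi E \<longleftrightarrow> (\<exists>P. valid_protocol P \<and> leaves_ok (\<lambda>j. snd (E ! j)) P psi \<and>
      (\<forall>j. outprob P psi j = (if j < length E then fst (E ! j) else 0)))"

definition locc_ens_trans :: "ensemble \<Rightarrow> ensemble \<Rightarrow> bool" where
  "locc_ens_trans D1 D2 \<longleftrightarrow> (\<exists>q :: nat \<Rightarrow> nat \<Rightarrow> real.
      (\<forall>i<length D1. \<forall>j<length D2. q i j \<ge> 0) \<and>
      (\<forall>i<length D1. (\<Sum>j<length D2. q i j) = 1) \<and>
      (\<forall>j<length D2. fst (D2 ! j) = (\<Sum>i<length D1. fst (D1 ! i) * q i j)) \<and>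
      (\<forall>i<length D1. locc_pure_to_ens (snd (D1 ! i)) (map (\<lambda>j. (q i j, snd (D2 ! j))) [0..<length D2])))"

end

theory Submission
  imports Defs
begin

text \<open>Read a pure two-qubit state v as the 2x2 matrix of its coefficients; |det v| is half
  its concurrence.  A local Kraus operator M multiplies det v by det M, and for a complete set
  of Kraus operators the |det M| sum to at most 1.  Hence along any LOCC protocol the expected
  |det| cannot increase, and a Schmidt state is never turned with certainty into a more
  entangled one: D1 -> D2 fails as soon as psi_1 is less entangled than phi.

  The weights must still make every E_k decrease.  Take phi with x(phi) = 2^-j, psi_1 with
  x(psi_1) = 2^-(j+1) and psi_2 maximally entangled.  A monotone f_k can jump to the value 1
  between consecutive dyadic points at most once, so among the s + 1 scales j = 0..s one has
  f_k(2^-j) = 1 only if f_k(2^-(j+1)) = 1, for every k.  For the remaining k, f_k(2^-j) < 1,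
  and a small weight p > 0 gives p f_k(2^-(j+1)) + (1 - p) \<ge> f_k(2^-j).\<close>

definition det2 :: "(bool \<Rightarrow> bool \<Rightarrow> complex) \<Rightarrow> complex" where
  "det2 v = v False False * v True True - v False True * v True False"

lemma det2_applyA: "det2 (applyA M v) = det2 M * det2 v"
  unfolding det2_def applyA_def by (simp add: UNIV_bool algebra_simps)

lemma det2_applyB: "det2 (applyB M v) = det2 M * det2 v"
  unfolding det2_def applyB_def by (simp add: UNIV_bool algebra_simps)

lemma double_norm_det2_le_sum_squares: "2 * cmod (det2 M) \<le> (\<Sum>i\<in>UNIV. \<Sum>c\<in>UNIV. (cmod (M c i))\<^sup>2)"
proof -
  have "cmod (det2 M) \<le> cmod (M False False) * cmod (M True True) + cmod (M False True) * cmod (M True False)"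
    unfolding det2_def by (metis norm_mult norm_triangle_ineq4)
  moreover have "2 * (cmod (M False False) * cmod (M True True)) \<le> (cmod (M False False))\<^sup>2 + (cmod (M True True))\<^sup>2"
    and "2 * (cmod (M False True) * cmod (M True False)) \<le> (cmod (M False True))\<^sup>2 + (cmod (M True False))\<^sup>2"
    using sum_squares_bound by (simp_all only: mult.assoc)
  ultimately show ?thesis by (simp add: UNIV_bool)
qed

lemma kraus_complete_column_sqnorm:
  assumes "kraus_complete Ms"
  shows "(\<Sum>M\<leftarrow>Ms. \<Sum>c\<in>UNIV. (cmod (M c i))\<^sup>2) = 1"
proof -
  have "complex_of_real (\<Sum>M\<leftarrow>Ms. \<Sum>c\<in>UNIV. (cmod (M c i))\<^sup>2)
        = (\<Sum>M\<leftarrow>Ms. \<Sum>c\<in>UNIV. cnj (M c i) * M c i)"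
    unfolding sum_list_of_real[symmetric] map_map o_def of_real_sum complex_norm_square
    by (simp add: mult.commute)
  also have "\<dots> = 1"
    using assms unfolding kraus_complete_def by simp
  finally show ?thesis by simp
qed

lemma kraus_complete_sum_norm_det2_le:
  assumes "kraus_complete Ms"
  shows "(\<Sum>M\<leftarrow>Ms. cmod (det2 M)) \<le> 1"
proof -
  have "2 * (\<Sum>M\<leftarrow>Ms. cmod (det2 M)) = (\<Sum>M\<leftarrow>Ms. 2 * cmod (det2 M))"
    by (simp add: sum_list_const_mult)
  also have "\<dots> \<le> (\<Sum>M\<leftarrow>Ms. \<Sum>i\<in>UNIV. \<Sum>c\<in>UNIV. (cmod (M c i))\<^sup>2)"
    by (rule sum_list_mono) (rule double_norm_det2_le_sum_squares)
  also have "\<dots> = (\<Sum>M\<leftarrow>Ms. \<Sum>c\<in>UNIV. (cmod (M c False))\<^sup>2)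
                   + (\<Sum>M\<leftarrow>Ms. \<Sum>c\<in>UNIV. (cmod (M c True))\<^sup>2)"
    by (simp add: UNIV_bool sum_list_addf)
  also have "\<dots> = 2"
    using assms by (simp add: kraus_complete_column_sqnorm)
  finally show ?thesis by simp
qed

lemma measurement_branches_le_norm_det2:
  assumes "kraus_complete (map fst l)"
    and "\<And>M. cmod (det2 (act M v)) = cmod (det2 M) * cmod (det2 v)"
    and "\<And>M Q. (M, Q) \<in> set l \<Longrightarrow> w M Q \<le> cmod (det2 (act M v))"
  shows "(\<Sum>x\<leftarrow>l. w (fst x) (snd x)) \<le> cmod (det2 v)"
proof -
  have "(\<Sum>x\<leftarrow>l. w (fst x) (snd x)) \<le> (\<Sum>x\<leftarrow>l. cmod (det2 (fst x)) * cmod (det2 v))"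
    by (rule sum_list_mono) (metis assms(2,3) prod.collapse)
  also have "\<dots> = (\<Sum>M\<leftarrow>map fst l. cmod (det2 M)) * cmod (det2 v)"
    by (simp add: sum_list_mult_const o_def)
  also have "\<dots> \<le> cmod (det2 v)"
    using kraus_complete_sum_norm_det2_le[OF assms(1)]
    by (intro mult_left_le_one_le) (auto intro!: sum_list_nonneg)
  finally show ?thesis .
qed

lemma outprob_mult_norm_det2_le:
  assumes "valid_protocol P" "leaves_ok phi P v" "sqnorm (phi j) = 1"
  shows "outprob P v j * cmod (det2 (phi j)) \<le> cmod (det2 v)"
  using assms(1,2)
proof (induction P arbitrary: v)
  case (Leaf i)
  show ?case
  proof (cases "i = j")
    case True
    then obtain c where c: "v = (\<lambda>a b. c * phi j a b)"
      using Leaf.prems(2) by auto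
    have "sqnorm v = (cmod c)\<^sup>2 * sqnorm (phi j)"
      unfolding c sqnorm_def by (simp add: norm_mult power_mult_distrib sum_distrib_left)
    moreover have "det2 v = c\<^sup>2 * det2 (phi j)"
      unfolding c det2_def by (simp add: algebra_simps power2_eq_square)
    ultimately show ?thesis
      using True assms(3) by (simp add: norm_mult norm_power)
  qed simp
next
  case (MeasA l)
  have "outprob (MeasA l) v j * cmod (det2 (phi j))
        = (\<Sum>x\<leftarrow>l. outprob (snd x) (applyA (fst x) v) j * cmod (det2 (phi j)))"
    by (simp add: sum_list_mult_const)
  also have "\<dots> \<le> cmod (det2 v)"
  proof (rule measurement_branches_le_norm_det2[where act = applyA])
    show "kraus_complete (map fst l)"
      using MeasA.prems by simp
    show "cmod (det2 (applyA M v)) = cmod (det2 M) * cmod (det2 v)" for M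
      by (simp add: det2_applyA norm_mult)
    show "outprob Q (applyA M v) j * cmod (det2 (phi j)) \<le> cmod (det2 (applyA M v))"
      if "(M, Q) \<in> set l" for M Q
      using MeasA.IH[OF that, of Q "applyA M v"] MeasA.prems that by fastforce
  qed
  finally show ?case .
next
  case (MeasB l)
  have "outprob (MeasB l) v j * cmod (det2 (phi j))
        = (\<Sum>x\<leftarrow>l. outprob (snd x) (applyB (fst x) v) j * cmod (det2 (phi j)))"
    by (simp add: sum_list_mult_const)
  also have "\<dots> \<le> cmod (det2 v)"
  proof (rule measurement_branches_le_norm_det2[where act = applyB])
    show "kraus_complete (map fst l)"
      using MeasB.prems by simp
    show "cmod (det2 (applyB M v)) = cmod (det2 M) * cmod (det2 v)" for M
      by (simp add: det2_applyB norm_mult)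
    show "outprob Q (applyB M v) j * cmod (det2 (phi j)) \<le> cmod (det2 (applyB M v))"
      if "(M, Q) \<in> set l" for M Q
      using MeasB.IH[OF that, of Q "applyB M v"] MeasB.prems that by fastforce
  qed
  finally show ?case .
qed

lemma locc_pure_to_pure_norm_det2_le:
  assumes "locc_pure_to_ens psi [(1, phi)]" "sqnorm phi = 1"
  shows "cmod (det2 phi) \<le> cmod (det2 psi)"
proof -
  obtain P where "valid_protocol P" "leaves_ok (\<lambda>j. snd ([(1::real, phi)] ! j)) P psi"
    and "outprob P psi 0 = 1"
    using assms(1) unfolding locc_pure_to_ens_def by fastforce
  with outprob_mult_norm_det2_le[of P "\<lambda>j. snd ([(1::real, phi)] ! j)" psi 0] assms(2) show ?thesis
    by simp
qed

lemma locc_ens_trans_to_pure_component: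
  assumes "locc_ens_trans D [(1, phi)]" "i < length D"
  shows "locc_pure_to_ens (snd (D ! i)) [(1, phi)]"
proof -
  obtain q where "(\<Sum>j<1. q i j) = 1"
    and "locc_pure_to_ens (snd (D ! i)) (map (\<lambda>j. (q i j, snd ([(1::real, phi)] ! j))) [0..<1])"
    using assms unfolding locc_ens_trans_def by fastforce
  then show ?thesis
    by simp
qed

lemma norm_det2_schmidt_state:
  assumes "a \<in> {0..1}"
  shows "cmod (det2 (schmidt_state a)) = sqrt (a * (1 - a))"
  using assms by (simp add: det2_def schmidt_state_def norm_mult real_sqrt_mult)

lemma sqnorm_schmidt_state: "a \<in> {0..1} \<Longrightarrow> sqnorm (schmidt_state a) = 1"
  unfolding sqnorm_def schmidt_state_def by (simp add: UNIV_bool)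

lemma not_locc_schmidt_state_to_more_entangled:
  assumes "0 \<le> a" "a < b" "b \<le> 1/2"
  shows "\<not> locc_pure_to_ens (schmidt_state a) [(1, schmidt_state b)]"
proof
  assume "locc_pure_to_ens (schmidt_state a) [(1, schmidt_state b)]"
  moreover have "a \<in> {0..1}" "b \<in> {0..1}"
    using assms by simp_all
  ultimately have "sqrt (b * (1 - b)) \<le> sqrt (a * (1 - a))"
    using locc_pure_to_pure_norm_det2_le sqnorm_schmidt_state norm_det2_schmidt_state
    by metis
  then have "b * (1 - b) \<le> a * (1 - a)"
    by simp
  moreover have "a * (1 - a) < b * (1 - b)"
  proof -
    have "b * (1 - b) - a * (1 - a) = (b - a) * (1 - a - b)"
      by algebra
    also have "\<dots> > 0"
      using assms by simp
    finally show ?thesis by simp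
  qed
  ultimately show False
    by simp
qed

lemma xval_half: "x \<in> {0..1} \<Longrightarrow> xval (x / 2) = x"
  unfolding xval_def by simp

lemma antimono_level_exit_unique:
  fixes g :: "nat \<Rightarrow> 'a::linorder"
  assumes "antimono g"
    and "g i = c" "g (Suc i) \<noteq> c"
    and "g j = c" "g (Suc j) \<noteq> c"
  shows "i = j"
proof -
  have False if "m < n" "g m = c" "g (Suc m) \<noteq> c" "g n = c" for m n
  proof -
    have "g n \<le> g (Suc m)" "g (Suc m) \<le> g m"
      using assms(1) that(1) by (simp_all add: antimonoD)
    then show False
      using that(2-4) by simp
  qed
  then show ?thesis
    using assms(2-5) by (metis linorder_neqE_nat)
qed

lemma finite_antimono_family_stable_step:
  fixes g :: "'k \<Rightarrow> nat \<Rightarrow> 'a::linorder"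
  assumes "finite K" "\<And>k. k \<in> K \<Longrightarrow> antimono (g k)"
  shows "\<exists>j \<le> card K. \<forall>k\<in>K. g k j = c \<longrightarrow> g k (Suc j) = c"
proof -
  define exits where "exits j = {k \<in> K. g k j = c \<and> g k (Suc j) \<noteq> c}" for j
  define B where "B = {j \<in> {..card K}. exits j \<noteq> {}}"
  define h where "h j = (SOME k. k \<in> exits j)" for j
  have h: "h j \<in> exits j" if "j \<in> B" for j
    using that unfolding B_def h_def by (simp add: some_in_eq)
  have "inj_on h B"
  proof (rule inj_onI)
    fix i j
    assume "i \<in> B" "j \<in> B" "h i = h j"
    then have "h i \<in> K" "g (h i) i = c" "g (h i) (Suc i) \<noteq> c" "g (h i) j = c" "g (h i) (Suc j) \<noteq> c"
      using h[of i] h[of j] unfolding exits_def by auto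
    then show "i = j"
      using assms(2) by (intro antimono_level_exit_unique[of "g (h i)" i c j]) auto
  qed
  moreover have "h ` B \<subseteq> K"
    using h unfolding exits_def by auto
  ultimately have "card B \<le> card K"
    using assms(1) by (intro card_inj_on_le)
  moreover have "finite B"
    unfolding B_def by simp
  ultimately have "\<not> {..card K} \<subseteq> B"
    using card_mono[of B "{..card K}"] by auto
  then show ?thesis
    unfolding B_def exits_def by auto
qed

lemma antimono_dyadic:
  fixes f :: "real \<Rightarrow> 'a::order"
  assumes "mono_on {0..1} f"
  shows "antimono (\<lambda>j::nat. f (1 / 2 ^ j))"
proof
  fix i j :: nat
  assume "i \<le> j"
  then have "(1::real) / 2 ^ j \<le> 1 / 2 ^ i"
    by (simp add: divide_simps)
  then show "f (1 / 2 ^ j) \<le> f (1 / 2 ^ i)"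
    by (intro mono_onD[OF assms]) auto
qed

lemma finite_below_one_uniform_gap:
  fixes y :: "'a \<Rightarrow> real"
  assumes "finite K" "\<And>k. k \<in> K \<Longrightarrow> y k < 1"
  shows "\<exists>p>0. p < 1 \<and> (\<forall>k\<in>K. y k \<le> 1 - p)"
proof (cases "K = {}")
  case True
  then show ?thesis
    by (intro exI[of _ "1/2"]) auto
next
  case False
  then have "Max (y ` K) < 1"
    using assms by simp
  moreover have "y k \<le> 1 - min (1/2) (1 - Max (y ` K))" if "k \<in> K" for k
  proof -
    have "y k \<le> Max (y ` K)"
      using assms(1) that by simp
    then show ?thesis
      by linarith
  qed
  ultimately show ?thesis
    by (intro exI[of _ "min (1/2) (1 - Max (y ` K))"]) simp
qed

lemma mixture_with_maximum_ge:
  fixes f :: "real \<Rightarrow> real"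
  assumes "mono_on {0..1} f" "f 0 = 0" "f 1 = 1"
    and "t \<in> {0..1}" "x \<in> {0..1}" "0 \<le> p"
    and "f x < 1 \<Longrightarrow> f x \<le> 1 - p" "f x = 1 \<Longrightarrow> f t = 1"
  shows "f x \<le> p * f t + (1 - p) * f 1"
proof -
  have "0 \<le> f t" "f x \<le> 1"
    using assms(2-5) mono_onD[OF assms(1), of 0 t] mono_onD[OF assms(1), of x 1] by auto
  then have "0 \<le> p * f t"
    using assms(6) by simp
  consider "f x < 1" | "f x = 1"
    using \<open>f x \<le> 1\<close> by fastforce
  then show ?thesis
  proof cases
    case 1
    then show ?thesis
      using assms(3,7) \<open>0 \<le> p * f t\<close> by simp
  next
    case 2
    then show ?thesis
      using assms(3,8) by simp
  qed
qed

lemma exists_weight_mixture_with_maximum_ge: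
  fixes f :: "'k \<Rightarrow> real \<Rightarrow> real"
  assumes "finite K"
    and "\<And>k. k \<in> K \<Longrightarrow> mono_on {0..1} (f k)" "\<And>k. k \<in> K \<Longrightarrow> f k 0 = 0" "\<And>k. k \<in> K \<Longrightarrow> f k 1 = 1"
    and "t \<in> {0..1}" "x \<in> {0..1}" "\<And>k. k \<in> K \<Longrightarrow> f k x = 1 \<Longrightarrow> f k t = 1"
  shows "\<exists>p>0. p < 1 \<and> (\<forall>k\<in>K. f k x \<le> p * f k t + (1 - p) * f k 1)"
proof -
  have "\<exists>p>0. p < 1 \<and> (\<forall>k\<in>{k\<in>K. f k x < 1}. f k x \<le> 1 - p)"
    using assms(1) by (intro finite_below_one_uniform_gap) simp_all
  then obtain p where p: "0 < p" "p < 1" and gap: "\<forall>k\<in>{k\<in>K. f k x < 1}. f k x \<le> 1 - p"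
    by blast
  have "f k x \<le> p * f k t + (1 - p) * f k 1" if k: "k \<in> K" for k
    using assms(2-4)[OF k] assms(5,6) assms(7)[OF k] gap k p(1)
    by (intro mixture_with_maximum_ge[where f = "f k"]) auto
  with p show ?thesis
    by blast
qed

theorem proposition1:
  fixes s :: nat and f :: "nat \<Rightarrow> real \<Rightarrow> real"
  assumes mono: "\<And>k x1 x2. k \<in> {1..s} \<Longrightarrow> x1 \<in> {0..1} \<Longrightarrow> x2 \<in> {0..1} \<Longrightarrow> x1 \<ge> x2 \<Longrightarrow> f k x1 \<ge> f k x2"
      and conc: "\<And>k. k \<in> {1..s} \<Longrightarrow> concave_on {0..1} (f k)"
      and norm0: "\<And>k. k \<in> {1..s} \<Longrightarrow> f k 0 = 0"
      and norm1: "\<And>k. k \<in> {1..s} \<Longrightarrow> f k 1 = 1"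
  shows "\<exists>a1 a2 b p1. a1 \<in> {0..1} \<and> a2 \<in> {0..1} \<and> b \<in> {0..1} \<and> 0 < p1 \<and> p1 < 1 \<and>
           (\<forall>k\<in>{1..s}. p1 * f k (xval a1) + (1 - p1) * f k (xval a2) \<ge> 1 * f k (xval b)) \<and>
           \<not> locc_ens_trans [(p1, schmidt_state a1), (1 - p1, schmidt_state a2)] [(1, schmidt_state b)]"
proof -
  have mono_f: "mono_on {0..1} (f k)" if "k \<in> {1..s}" for k
    using mono[OF that] by (intro mono_onI) auto
  then have "antimono (\<lambda>j::nat. f k (1 / 2 ^ j))" if "k \<in> {1..s}" for k
    using antimono_dyadic that by blast
  then obtain j where j: "\<forall>k\<in>{1..s}. f k (1 / 2 ^ j) = 1 \<longrightarrow> f k (1 / 2 ^ Suc j) = 1"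
    using finite_antimono_family_stable_step[of "{1..s}" "\<lambda>k j. f k (1 / 2 ^ j)" 1] by blast
  define x :: real where "x = 1 / 2 ^ j"
  have x: "0 < x" "x \<le> 1"
    unfolding x_def by simp_all
  have "\<And>k. k \<in> {1..s} \<Longrightarrow> f k x = 1 \<Longrightarrow> f k (x / 2) = 1"
    using j unfolding x_def by (simp add: mult.commute)
  then obtain p where p: "0 < p" "p < 1" and mixture: "\<forall>k\<in>{1..s}. f k x \<le> p * f k (x / 2) + (1 - p) * f k 1"
    using exists_weight_mixture_with_maximum_ge[of "{1..s}" f "x / 2" x] mono_f norm0 norm1 x by auto
  have xval_witnesses: "xval (x / 4) = x / 2" "xval (1 / 2) = 1" "xval (x / 2) = x"
    using x xval_half[of "x / 2"] xval_half[of 1] xval_half[of x] by simp_all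
  have "\<not> locc_pure_to_ens (schmidt_state (x / 4)) [(1, schmidt_state (x / 2))]"
    using x by (intro not_locc_schmidt_state_to_more_entangled) simp_all
  then have "\<not> locc_ens_trans [(p, schmidt_state (x / 4)), (1 - p, schmidt_state (1 / 2))] [(1, schmidt_state (x / 2))]"
    using locc_ens_trans_to_pure_component[of _ _ 0] by fastforce
  with x p mixture show ?thesis
    by (intro exI[of _ "x / 4"] exI[of _ "1 / 2"] exI[of _ "x / 2"] exI[of _ p]) (simp add: xval_witnesses)
qed

end
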